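(* In any execution of $\mathcal{U}$, if some process executes line 6 for operation $o$ at time $T$ (that is, in that iteration it read from $S$ at line 5 a tuple whose time field is $t(o)$ and whose pointer field is $h(o)$), then $o$ is done at time $T$.
   Context: Model: an asynchronous shared-memory system with possibly infinitely many processes, any of which may crash, communicating via atomic shared objects. A fetch-and-increment (F\&I) object stores an integer; F\&I$(C)$ atomically returns the current value and increments it. A generalized-compare-and-swap (GCAS) object $O$ stores a value and supports Read$(O)$ and GCAS$(c, O, v_1, v_2)$, which atomically does: if $c(\text{current value of } O, v_1)$ holds then set $O := v_2$ and return true, else return false. Tuples are compared componentwise for $=$; GCAS$(>, A, (t,-,-), v)$ succeeds iff the time field of $A$ is strictly greater than $t$. Implemented type $\mathcal{T} = (OP, RES, Q, \delta)$ with initial state $s_0$; a procedure $apply_{\mathcal{T}}(o,s)$ returns some $(s',r)$ with $(s,o,s',r)\in\delta$. $NULL$ is a value different from every response of $\mathcal{T}$, and $NOOP$ is a name different from every operation of $\mathcal{T}$. Algorithm $\mathcal{U}$: each process $p$ owns a GCAS object $H_p$ with fields $(time, response)$. Shared objects: F\&I object $C$, initially $1$; GCAS object $A$ with fields $(time, op, ptr)$, initially $(0, NOOP, h(NOOP))$, where $h(NOOP)$ is a pointer to an immutable location containing $(0,\perp)$; GCAS object $S$ with fields $(time, state, response, ptr)$, initially $(0, s_0, \perp, h(NOOP))$. Process $p$ performs operation $o$ by calling DoOp$(o)$: (1) DoOp$(o)$ invoked; (2) $t := $ F\&I$(C)$; (3) $H_p := (t, NULL)$; (4) while $H_p = (t,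 NULL)$ do: (5) $(t^*, s^*, r^*, roptr^* ) := S$; (6) GCAS$(=, *roptr^*, (t^*, NULL), (t^*, r^* ))$; (7) GCAS$(>, A, (t,-,-), (t, o, \&H_p))$; (8) $(t', o', roptr') := A$; (9) $(\hat t, \hat r) := *roptr'$; (10) if $(\hat t,\hat r) = (t', NULL)$ then (11) $(s', r') := apply_{\mathcal{T}}(o', s^* )$; (12) GCAS$(=, S, (t^*,s^*,r^*,roptr^* ), (t', s', r', roptr'))$; (13) else GCAS$(=, A, (t', o', roptr'), (t, o, \&H_p))$; end while; (14) return $H_p.response$. Notation: an "operation" $o$ means one invocation of DoOp$(o)$ (or the initial $NOOP$). $p(o)$ is the process executing it; $t(o)$ is the value returned by its F\&I at line 2, or $\infty$ if line 2 has not been executed; $h(o)$ is $H_{p(o)}$. For $NOOP$: $t(NOOP)=0$ and $h(NOOP)$ is the immutable location containing $(0,\perp)$. Operation $o$ is done at time $T$ if at some time $T'\le T$, $h(o) = (t(o), r)$ with $r \neq NULL$. "Operation $o$ is stored in $S$" means $S = (t(o), -, r, h(o))$ for some $r$; "line 12 is executed for $o$" means the new value written in that GCAS has time field $t(o)$ and pointer field $h(o)$. *)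

theory Defs
  imports Main
begin

text \<open>Processes have type 'p (possibly infinitely many),
operations of the implemented type have type 'o, states 's, responses 'r.
The transition relation delta of the type is a set of tuples (s, o, s', r).\<close>

datatype 'r rv = Null | Bot | Res 'r
datatype 'o opv = Noop | Op 'o
datatype 'p ptr = HNoop | HProc 'p      \<comment> \<open>h(NOOP) and &H_p\<close>

type_synonym ('p,'s,'r) stup = "nat \<times> 's \<times> 'r rv \<times> 'p ptr"
type_synonym ('p,'o) atup = "nat \<times> 'o opv \<times> 'p ptr"

text \<open>Local control state of a process (program counter + local variables).
Lx means: the next step of the process executes line x.
Local computations (line 10 test, line 11 apply) are merged into the
adjacent shared-memory step.\<close>
datatype ('p,'o,'s,'r) pcs =
    Idle
  | L2 'o
  | L3 'o nat
  | L4 'o nat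
  | L5 'o nat
  | L6 'o nat "('p,'s,'r) stup"
  | L7 'o nat "('p,'s,'r) stup"
  | L8 'o nat "('p,'s,'r) stup"
  | L9 'o nat "('p,'s,'r) stup" "('p,'o) atup"
  | L12 'o nat "('p,'s,'r) stup" "('p,'o) atup"
  | L13 'o nat "('p,'s,'r) stup" "('p,'o) atup"
  | L14 'o nat

record ('p,'o,'s,'r) conf =
  Cv :: nat
  Av :: "('p,'o) atup"
  Sv :: "('p,'s,'r) stup"
  Hv :: "'p \<Rightarrow> nat \<times> 'r rv"
  pcv :: "'p \<Rightarrow> ('p,'o,'s,'r) pcs"

definition deref :: "('p,'o,'s,'r) conf \<Rightarrow> 'p ptr \<Rightarrow> nat \<times> 'r rv" where
  "deref c q = (case q of HNoop \<Rightarrow> (0, Bot) | HProc p \<Rightarrow> Hv c p)"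

definition gcas_ptr :: "('p \<Rightarrow> nat \<times> 'r rv) \<Rightarrow> 'p ptr \<Rightarrow> nat \<times> 'r rv \<Rightarrow> nat \<times> 'r rv
                        \<Rightarrow> ('p \<Rightarrow> nat \<times> 'r rv)" where
  "gcas_ptr H q old new = (case q of HNoop \<Rightarrow> H
      | HProc p \<Rightarrow> (if H p = old then H(p := new) else H))"

inductive step :: "('s \<times> 'o \<times> 's \<times> 'r) set \<Rightarrow> 'p \<Rightarrow> ('p,'o,'s,'r) conf \<Rightarrow> ('p,'o,'s,'r) conf \<Rightarrow> bool"
  for \<delta> :: "('s \<times> 'o \<times> 's \<times> 'r) set" where
  l1: "pcv c p = Idle \<Longrightarrow> step \<delta> p c (c\<lparr>pcv := (pcv c)(p := L2 oo)\<rparr>)"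
| l2: "pcv c p = L2 oo \<Longrightarrow>
     step \<delta> p c (c\<lparr>Cv := Cv c + 1, pcv := (pcv c)(p := L3 oo (Cv c))\<rparr>)"
| l3: "pcv c p = L3 oo t \<Longrightarrow>
     step \<delta> p c (c\<lparr>Hv := (Hv c)(p := (t, Null)), pcv := (pcv c)(p := L4 oo t)\<rparr>)"
| l4: "pcv c p = L4 oo t \<Longrightarrow>
     step \<delta> p c (c\<lparr>pcv := (pcv c)(p := (if Hv c p = (t, Null) then L5 oo t else L14 oo t))\<rparr>)"
| l5: "pcv c p = L5 oo t \<Longrightarrow>
     step \<delta> p c (c\<lparr>pcv := (pcv c)(p := L6 oo t (Sv c))\<rparr>)"
| l6: "pcv c p = L6 oo t (ts, ss, rs, ps) \<Longrightarrow>
     step \<delta> p c (c\<lparr>Hv := gcas_ptr (Hv c) ps (ts, Null) (ts, rs),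
                   pcv := (pcv c)(p := L7 oo t (ts, ss, rs, ps))\<rparr>)"
| l7: "pcv c p = L7 oo t st \<Longrightarrow>
     step \<delta> p c (c\<lparr>Av := (if fst (Av c) > t then (t, Op oo, HProc p) else Av c),
                   pcv := (pcv c)(p := L8 oo t st)\<rparr>)"
| l8: "pcv c p = L8 oo t st \<Longrightarrow>
     step \<delta> p c (c\<lparr>pcv := (pcv c)(p := L9 oo t st (Av c))\<rparr>)"
| l9_10: "pcv c p = L9 oo t st (ta, oa, pa) \<Longrightarrow>
     step \<delta> p c (c\<lparr>pcv := (pcv c)(p := (if deref c pa = (ta, Null)
                                     then L12 oo t st (ta, oa, pa)
                                     else L13 oo t st (ta, oa, pa)))\<rparr>)"
| l11_12: "pcv c p = L12 oo t (ts, ss, rs, ps) (ta, Op x, pa) \<Longrightarrow> (ss, x, s', r') \<in> \<delta> \<Longrightarrow>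
     step \<delta> p c (c\<lparr>Sv := (if Sv c = (ts, ss, rs, ps) then (ta, s', Res r', pa) else Sv c),
                   pcv := (pcv c)(p := L4 oo t)\<rparr>)"
| l13: "pcv c p = L13 oo t st aa \<Longrightarrow>
     step \<delta> p c (c\<lparr>Av := (if Av c = aa then (t, Op oo, HProc p) else Av c),
                   pcv := (pcv c)(p := L4 oo t)\<rparr>)"
| l14: "pcv c p = L14 oo t \<Longrightarrow>
     step \<delta> p c (c\<lparr>pcv := (pcv c)(p := Idle)\<rparr>)"

text \<open>Initial configuration (initial contents of the H_p are left arbitrary).\<close>
definition initial :: "'s \<Rightarrow> ('p,'o,'s,'r) conf \<Rightarrow> bool" where
  "initial s0 c \<longleftrightarrow> Cv c = 1 \<and> Av c = (0, Noop, HNoop) \<and> Sv c = (0, s0, Bot, HNoop)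
                     \<and> (\<forall>p. pcv c p = Idle)"

text \<open>A (finite) execution with n steps: configurations c 0 .. c n; step i is taken by
process who i and leads from c i to c (Suc i). Crashed processes simply take no more steps.\<close>
definition execution :: "('s \<times> 'o \<times> 's \<times> 'r) set \<Rightarrow> 's \<Rightarrow> (nat \<Rightarrow> ('p,'o,'s,'r) conf)
                         \<Rightarrow> (nat \<Rightarrow> 'p) \<Rightarrow> nat \<Rightarrow> bool" where
  "execution \<delta> s0 c who n \<longleftrightarrow> initial s0 (c 0) \<and> (\<forall>i<n. step \<delta> (who i) (c i) (c (Suc i)))"

text \<open>Operations: the initial NOOP, or an invocation of process p that obtained
ticket t from its F&I at line 2 (such invocations are uniquely identified by (p,t)).\<close>
datatype 'p operation = NoopOp | Inv 'p nat

primrec t_of :: "'p operation \<Rightarrow> nat" where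
  "t_of NoopOp = 0" | "t_of (Inv p t) = t"

primrec h_of :: "'p operation \<Rightarrow> 'p ptr" where
  "h_of NoopOp = HNoop" | "h_of (Inv p t) = HProc p"

definition is_operation :: "(nat \<Rightarrow> ('p,'o,'s,'r) conf) \<Rightarrow> (nat \<Rightarrow> 'p) \<Rightarrow> nat \<Rightarrow> 'p operation \<Rightarrow> bool" where
  "is_operation c who n op \<longleftrightarrow> (case op of NoopOp \<Rightarrow> True
     | Inv p t \<Rightarrow> (\<exists>i<n. who i = p \<and> (\<exists>oo. pcv (c i) p = L2 oo) \<and> Cv (c i) = t))"

definition done_at :: "(nat \<Rightarrow> ('p,'o,'s,'r) conf) \<Rightarrow> 'p operation \<Rightarrow> nat \<Rightarrow> bool" where
  "done_at c op T \<longleftrightarrow> (\<exists>T'\<le>T. \<exists>r. deref (c T') (h_of op) = (t_of op, r) \<and> r \<noteq> Null)"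

definition line6_for :: "(nat \<Rightarrow> ('p,'o,'s,'r) conf) \<Rightarrow> (nat \<Rightarrow> 'p) \<Rightarrow> nat \<Rightarrow> 'p operation \<Rightarrow> nat \<Rightarrow> bool" where
  "line6_for c who n op T \<longleftrightarrow> T < n \<and>
     (\<exists>oo t s r. pcv (c T) (who T) = L6 oo t (t_of op, s, r, h_of op))"

end

theory Submission
  imports Defs
begin

text \<open>Invariant: whenever a pointer \<open>(t, &H_q)\<close> is stored anywhere (in \<open>A\<close>, in \<open>S\<close>, or in a
local snapshot that a process will still act upon), either \<open>H_q\<close> has already held a non-NULL
response for ticket \<open>t\<close>, or \<open>H_q = (t, NULL)\<close> and \<open>q\<close> is still inside its loop with ticket \<open>t\<close>.
New pointers are created only at lines 7 and 13 by \<open>q\<close> itself, and \<open>H_q\<close> leaves \<open>(t, NULL)\<close>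
only by receiving a response. So when line 6 reads \<open>(t, -, r, &H_q)\<close> from \<open>S\<close>, either
\<open>H_q\<close> is already done, or its GCAS succeeds and writes the response \<open>r\<close>, which is non-NULL.\<close>

fun loop_ticket :: "('p,'o,'s,'r) pcs \<Rightarrow> nat option" where
  "loop_ticket (L4 oo t) = Some t"
| "loop_ticket (L5 oo t) = Some t"
| "loop_ticket (L6 oo t st) = Some t"
| "loop_ticket (L7 oo t st) = Some t"
| "loop_ticket (L8 oo t st) = Some t"
| "loop_ticket (L9 oo t st a) = Some t"
| "loop_ticket (L12 oo t st a) = Some t"
| "loop_ticket (L13 oo t st a) = Some t"
| "loop_ticket _ = None"

definition holds_ptr :: "('p,'o,'s,'r) conf \<Rightarrow> nat \<Rightarrow> 'p \<Rightarrow> bool" where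
  "holds_ptr c t q \<longleftrightarrow> (fst (Av c) = t \<and> snd (snd (Av c)) = HProc q)
     \<or> (fst (Sv c) = t \<and> snd (snd (snd (Sv c))) = HProc q)
     \<or> (\<exists>p oo t' s r. pcv c p = L6 oo t' (t, s, r, HProc q))
     \<or> (\<exists>p oo t' st o'. pcv c p = L9 oo t' st (t, o', HProc q))
     \<or> (\<exists>p oo t' st o'. pcv c p = L12 oo t' st (t, o', HProc q))"

definition responses_non_null :: "('p,'o,'s,'r) conf \<Rightarrow> bool" where
  "responses_non_null c \<longleftrightarrow> fst (snd (snd (Sv c))) \<noteq> Null
     \<and> (\<forall>p oo t ts s r h. pcv c p = L6 oo t (ts, s, r, h) \<longrightarrow> r \<noteq> Null)"

definition H_time_is_ticket :: "('p,'o,'s,'r) conf \<Rightarrow> bool" where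
  "H_time_is_ticket c \<longleftrightarrow> (\<forall>q t. loop_ticket (pcv c q) = Some t \<longrightarrow> fst (Hv c q) = t)"

definition pending_or_done :: "('p \<Rightarrow> nat \<Rightarrow> bool) \<Rightarrow> ('p,'o,'s,'r) conf \<Rightarrow> bool" where
  "pending_or_done D c \<longleftrightarrow> (\<forall>t q. holds_ptr c t q \<longrightarrow>
     D q t \<or> (Hv c q = (t, Null) \<and> loop_ticket (pcv c q) = Some t))"

definition done_by :: "(nat \<Rightarrow> ('p,'o,'s,'r) conf) \<Rightarrow> nat \<Rightarrow> 'p \<Rightarrow> nat \<Rightarrow> bool" where
  "done_by c k q t \<longleftrightarrow> (\<exists>k'\<le>k. \<exists>r. Hv (c k') q = (t, r) \<and> r \<noteq> Null)"

lemma gcas_ptr_cases: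
  "gcas_ptr H h old new q = H q \<or> (h = HProc q \<and> H q = old \<and> gcas_ptr H h old new q = new)"
  by (auto simp: gcas_ptr_def split: ptr.splits)

lemma step_line6_Hv:
  assumes "step \<delta> p c c'" and "pcv c p = L6 oo t (ts, s, r, h)"
  shows "Hv c' = gcas_ptr (Hv c) h (ts, Null) (ts, r)"
  using assms by cases auto

lemma responses_non_null_step:
  assumes "step \<delta> p c c'" and "responses_non_null c"
  shows "responses_non_null c'"
  using assms
proof cases
  case (l5 oo t)
  then show ?thesis using assms(2) by (auto simp: responses_non_null_def)
next
  case (l11_12 oo t ts ss rs h ta x pa s' r')
  then show ?thesis using assms(2) by (auto simp: responses_non_null_def)
qed (use assms(2) in \<open>auto simp: responses_non_null_def split: if_splits\<close>)

lemma H_time_is_ticket_step: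
  assumes "step \<delta> p c c'" and "H_time_is_ticket c"
  shows "H_time_is_ticket c'"
  using assms
proof cases
  case (l6 oo t ts s r h)
  show ?thesis unfolding H_time_is_ticket_def
  proof (intro allI impI)
    fix q t' assume "loop_ticket (pcv c' q) = Some t'"
    then have "loop_ticket (pcv c q) = Some t'" using l6 by (auto split: if_splits)
    then have "fst (Hv c q) = t'" using assms(2) by (auto simp: H_time_is_ticket_def)
    then show "fst (Hv c' q) = t'"
      using l6 gcas_ptr_cases[of "Hv c" h "(ts, Null)" "(ts, r)" q] by auto
  qed
qed (use assms(2) in \<open>auto simp: H_time_is_ticket_def split: if_splits\<close>)

lemma holds_ptr_step:
  assumes "step \<delta> p c c'" and "holds_ptr c' t q"
  shows "holds_ptr c t q
    \<or> (q = p \<and> (\<exists>oo st. pcv c p = L7 oo t st \<or> (\<exists>a. pcv c p = L13 oo t st a)))"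
  using assms
proof cases
  case (l5 oo t)
  then show ?thesis using assms(2) unfolding holds_ptr_def
    by (auto split: if_splits; metis prod.collapse)
next
  case (l8 oo t st)
  then show ?thesis using assms(2) unfolding holds_ptr_def
    by (auto split: if_splits; metis prod.collapse)
qed (use assms(2) in \<open>auto simp: holds_ptr_def split: if_splits\<close>)

lemma pending_step:
  assumes "step \<delta> p c c'" and "responses_non_null c"
    and "Hv c q = (t, Null)" and "loop_ticket (pcv c q) = Some t"
  shows "(\<exists>r. Hv c' q = (t, r) \<and> r \<noteq> Null)
    \<or> (Hv c' q = (t, Null) \<and> loop_ticket (pcv c' q) = Some t)"
  using assms(1)
proof cases
  case (l6 oo t' ts s r h)
  have "r \<noteq> Null" using assms(2) l6 unfolding responses_non_null_def by blast
  moreover have "loop_ticket (pcv c' q) = Some t" using l6 assms(4) by auto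
  moreover have "Hv c' q = Hv c q \<or> (h = HProc q \<and> Hv c q = (ts, Null) \<and> Hv c' q = (ts, r))"
    using gcas_ptr_cases[of "Hv c" h "(ts, Null)" "(ts, r)" q] l6 by auto
  ultimately show ?thesis using assms(3) by auto
qed (use assms(3,4) in \<open>auto split: if_splits\<close>)

lemma pending_or_done_step:
  assumes step: "step \<delta> p c c'"
    and "responses_non_null c" and ticket: "H_time_is_ticket c" and inv: "pending_or_done D c"
    and mono: "\<And>q t. D q t \<Longrightarrow> D' q t"
    and done_now: "\<And>q t r. Hv c q = (t, r) \<Longrightarrow> r \<noteq> Null \<Longrightarrow> D' q t"
    and done_next: "\<And>q t r. Hv c' q = (t, r) \<Longrightarrow> r \<noteq> Null \<Longrightarrow> D' q t"
  shows "pending_or_done D' c'"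
  unfolding pending_or_done_def
proof (intro allI impI)
  fix t q assume holds': "holds_ptr c' t q"
  show "D' q t \<or> (Hv c' q = (t, Null) \<and> loop_ticket (pcv c' q) = Some t)"
  proof (cases "holds_ptr c t q")
    case True
    then have "D q t \<or> (Hv c q = (t, Null) \<and> loop_ticket (pcv c q) = Some t)"
      using inv unfolding pending_or_done_def by blast
    then show ?thesis using pending_step[OF step assms(2)] mono done_next by blast
  next
    case False
    then obtain oo st where q: "q = p"
      and pc: "pcv c p = L7 oo t st \<or> (\<exists>a. pcv c p = L13 oo t st a)"
      using holds_ptr_step[OF step holds'] by blast
    then have "fst (Hv c p) = t" using ticket by (auto simp: H_time_is_ticket_def)
    moreover have "Hv c' p = Hv c p" and "loop_ticket (pcv c' p) = Some t"
      using step pc by (cases rule: step.cases; auto)+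
    ultimately show ?thesis using done_now[of p t "snd (Hv c p)"] q by (metis prod.collapse)
  qed
qed

lemma execution_invariants:
  assumes "execution \<delta> s0 c who n" and "k \<le> n"
  shows "responses_non_null (c k) \<and> H_time_is_ticket (c k) \<and> pending_or_done (done_by c k) (c k)"
  using assms(2)
proof (induction k)
  case 0
  have "initial s0 (c 0)" using assms(1) by (simp add: execution_def)
  then show ?case
    by (auto simp: initial_def responses_non_null_def H_time_is_ticket_def
        pending_or_done_def holds_ptr_def)
next
  case (Suc k)
  then have IH: "responses_non_null (c k)" "H_time_is_ticket (c k)"
    "pending_or_done (done_by c k) (c k)" by auto
  have step: "step \<delta> (who k) (c k) (c (Suc k))"
    using assms(1) Suc.prems by (simp add: execution_def)
  have "pending_or_done (done_by c (Suc k)) (c (Suc k))"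
    by (rule pending_or_done_step[OF step IH]) (auto simp: done_by_def intro: le_SucI)
  then show ?case
    using responses_non_null_step[OF step IH(1)] H_time_is_ticket_step[OF step IH(2)] by blast
qed

theorem mainTheorem6:
  fixes \<delta> :: "('s \<times> 'o \<times> 's \<times> 'r) set" and s0 :: 's
    and c :: "nat \<Rightarrow> ('p,'o,'s,'r) conf" and who :: "nat \<Rightarrow> 'p" and n T :: nat
    and op :: "'p operation"
  assumes "execution \<delta> s0 c who n"
    and "is_operation c who n op"
    and "line6_for c who n op T"
  shows "done_at c op (Suc T)"
proof (cases op)
  case NoopOp
  then show ?thesis by (auto simp: done_at_def deref_def)
next
  case (Inv p t)
  obtain oo t' s r where pc: "pcv (c T) (who T) = L6 oo t' (t, s, r, HProc p)" and "T < n"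
    using assms(3) Inv unfolding line6_for_def by auto
  then have step: "step \<delta> (who T) (c T) (c (Suc T))"
    and inv: "responses_non_null (c T)" "pending_or_done (done_by c T) (c T)"
    using assms(1) execution_invariants[OF assms(1), of T] by (auto simp: execution_def)
  have "r \<noteq> Null" using inv(1) pc unfolding responses_non_null_def by blast
  moreover have "holds_ptr (c T) t p" using pc unfolding holds_ptr_def by blast
  then have "done_by c T p t \<or> Hv (c T) p = (t, Null)"
    using inv(2) unfolding pending_or_done_def by blast
  moreover have "Hv (c (Suc T)) = gcas_ptr (Hv (c T)) (HProc p) (t, Null) (t, r)"
    using step_line6_Hv[OF step pc] .
  ultimately show ?thesis
    unfolding done_at_def done_by_def deref_def Inv
    by (auto simp: gcas_ptr_def intro: le_SucI)
qed

end
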